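(* Let $V$ be a finite vocabulary and $\mathcal{M}$ a transformer language model with deterministic forward pass and next-token probabilities $P_{\mathcal{M}}(t\mid t_1,\ldots,t_{i-1})$. Let $(t_1,\ldots,t_n)$ be a random token sequence drawn from $P_{\mathcal{M}}$, let $\mathrm{KV}_i = F_{\mathcal{M}}(t_1,\ldots,t_i)$ be the key–value state at position $i$, and assume the layer-1 key vectors $W_K^{(1)}E(t)$, $t\in V$, are pairwise distinct. Define the perplexity $\mathrm{PP}(\mathcal{M})$ by $\log_2\mathrm{PP}(\mathcal{M}) = \frac1n\,\mathbb{E}\bigl[-\log_2 P_{\mathcal{M}}(t_1,\ldots,t_n)\bigr]$. Then \[ \frac1n\sum_{i=1}^n H\bigl(\mathrm{KV}_i \mid \mathrm{KV}_{\leq i-1}\bigr) \;\leq\; \log_2 \mathrm{PP}(\mathcal{M}), \] where for $i=1$ the term is $H(\mathrm{KV}_1)$. In particular, if $\mathrm{PP}(\mathcal{M})\le 20$ the left side is at most $\log_2 20\approx 4.3$ bits.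
   Context: The transformer has $L$ layers, $H_{\mathrm{head}}$ heads and head dimension $d$; $F_{\mathcal{M}}:V^i\to\mathbb{R}^{2LH_{\mathrm{head}}d}$ is the deterministic map sending a prefix to the concatenation over all layers of the key and value vectors at position $i$. This vector contains the layer-1 key $W_K^{(1)}E(t_i)$, with $E$ the token embedding and $W_K^{(1)}$ the layer-1 key projection. $\mathrm{KV}_{\le i-1}=(\mathrm{KV}_1,\ldots,\mathrm{KV}_{i-1})$. Entropies are Shannon entropies in bits of these finitely-valued random variables. *)

theory Defs
  imports Complex_Main
begin

definition prob_of :: "('o \<Rightarrow> real) \<Rightarrow> 'o set \<Rightarrow> ('o \<Rightarrow> 'x) \<Rightarrow> 'x \<Rightarrow> real" where
  "prob_of p \<Omega> X x = (\<Sum>\<omega>\<in>{\<omega>\<in>\<Omega>. X \<omega> = x}. p \<omega>)"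

definition entropy2 :: "('o \<Rightarrow> real) \<Rightarrow> 'o set \<Rightarrow> ('o \<Rightarrow> 'x) \<Rightarrow> real" where
  "entropy2 p \<Omega> X = - (\<Sum>x\<in>X ` \<Omega>. prob_of p \<Omega> X x * log 2 (prob_of p \<Omega> X x))"

definition cond_entropy2 :: "('o \<Rightarrow> real) \<Rightarrow> 'o set \<Rightarrow> ('o \<Rightarrow> 'x) \<Rightarrow> ('o \<Rightarrow> 'y) \<Rightarrow> real" where
  "cond_entropy2 p \<Omega> X Y =
     - (\<Sum>(x, y)\<in>(\<lambda>\<omega>. (X \<omega>, Y \<omega>)) ` \<Omega>.
          prob_of p \<Omega> (\<lambda>\<omega>. (X \<omega>, Y \<omega>)) (x, y) *
          log 2 (prob_of p \<Omega> (\<lambda>\<omega>. (X \<omega>, Y \<omega>)) (x, y) / prob_of p \<Omega> Y y))"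

definition seqs :: "nat \<Rightarrow> 'v list set" where
  "seqs n = {xs. length xs = n}"

definition seq_prob :: "('v list \<Rightarrow> 'v \<Rightarrow> real) \<Rightarrow> 'v list \<Rightarrow> real" where
  "seq_prob P xs = (\<Prod>i<length xs. P (take i xs) (xs ! i))"

definition KV :: "('v list \<Rightarrow> 'a) \<Rightarrow> nat \<Rightarrow> 'v list \<Rightarrow> 'a" where
  "KV F i xs = F (take i xs)"

text \<open>KV_{<= i-1} = (KV_1, ..., KV_{i-1}); empty (constant) for i = 1.\<close>
definition KV_upto :: "('v list \<Rightarrow> 'a) \<Rightarrow> nat \<Rightarrow> 'v list \<Rightarrow> 'a list" where
  "KV_upto F i xs = map (\<lambda>j. KV F j xs) [1..<i]"

definition perplexity :: "('v list \<Rightarrow> 'v \<Rightarrow> real) \<Rightarrow> nat \<Rightarrow> real" where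
  "perplexity P n = 2 powr ((1 / real n) *
      (\<Sum>xs\<in>seqs n. seq_prob P xs * (- log 2 (seq_prob P xs))))"

end

theory Submission
  imports Defs
begin

text \<open>Because the layer-1 key at position \<open>i\<close> is an injective function of the token \<open>t_i\<close>,
  the states \<open>KV_1, \<dots>, KV_i\<close> determine the prefix \<open>t_1 \<dots> t_i\<close> and conversely. Hence
  \<open>H(KV_i | KV_{\<le>i-1}) = H(t_1 \<dots> t_i) - H(t_1 \<dots> t_{i-1})\<close>, the sum over \<open>i\<close> telescopes to the
  joint entropy \<open>H(t_1 \<dots> t_n)\<close>, and that is exactly \<open>n log_2 PP\<close>: the bound holds with equality.\<close>

lemma sum_prob_of_image:
  assumes "finite \<Omega>"
  shows "(\<Sum>z\<in>X ` \<Omega>. prob_of p \<Omega> X z * g z) = (\<Sum>\<omega>\<in>\<Omega>. p \<omega> * g (X \<omega>))"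
proof -
  have "(\<Sum>\<omega>\<in>\<Omega>. p \<omega> * g (X \<omega>)) = (\<Sum>z\<in>X ` \<Omega>. \<Sum>\<omega>\<in>{\<omega>\<in>\<Omega>. X \<omega> = z}. p \<omega> * g (X \<omega>))"
    using sum.image_gen[OF assms] by blast
  also have "\<dots> = (\<Sum>z\<in>X ` \<Omega>. prob_of p \<Omega> X z * g z)"
    unfolding prob_of_def sum_distrib_right by (intro sum.cong refl) auto
  finally show ?thesis by simp
qed

lemma prob_of_ge_weight:
  assumes "finite \<Omega>" "\<And>\<omega>. \<omega> \<in> \<Omega> \<Longrightarrow> p \<omega> \<ge> 0" "\<omega> \<in> \<Omega>"
  shows "p \<omega> \<le> prob_of p \<Omega> X (X \<omega>)"
proof -
  have "p \<omega> = (\<Sum>\<omega>'\<in>{\<omega>}. p \<omega>')" by simp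
  also have "\<dots> \<le> (\<Sum>\<omega>'\<in>{\<omega>'\<in>\<Omega>. X \<omega>' = X \<omega>}. p \<omega>')"
    using assms by (intro sum_mono2) auto
  finally show ?thesis by (simp add: prob_of_def)
qed

lemma prob_of_cong_partition:
  assumes "\<And>\<omega>'. \<omega>' \<in> \<Omega> \<Longrightarrow> X \<omega>' = X \<omega> \<longleftrightarrow> Y \<omega>' = Y \<omega>"
  shows "prob_of p \<Omega> X (X \<omega>) = prob_of p \<Omega> Y (Y \<omega>)"
  unfolding prob_of_def using assms by (intro sum.cong) auto

lemma entropy2_id:
  assumes "finite \<Omega>"
  shows "entropy2 p \<Omega> (\<lambda>\<omega>. \<omega>) = - (\<Sum>\<omega>\<in>\<Omega>. p \<omega> * log 2 (p \<omega>))"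
proof -
  have "prob_of p \<Omega> (\<lambda>\<omega>. \<omega>) \<omega> = p \<omega>" if "\<omega> \<in> \<Omega>" for \<omega>
  proof -
    have "{\<omega>'\<in>\<Omega>. \<omega>' = \<omega>} = {\<omega>}" using that by auto
    then show ?thesis by (simp add: prob_of_def)
  qed
  then show ?thesis by (simp add: entropy2_def)
qed

lemma cond_entropy2_eq_sum:
  assumes "finite \<Omega>" "\<And>\<omega>. \<omega> \<in> \<Omega> \<Longrightarrow> p \<omega> \<ge> 0"
  shows "cond_entropy2 p \<Omega> X Y =
    - (\<Sum>\<omega>\<in>\<Omega>. p \<omega> * (log 2 (prob_of p \<Omega> (\<lambda>\<omega>. (X \<omega>, Y \<omega>)) (X \<omega>, Y \<omega>))
                       - log 2 (prob_of p \<Omega> Y (Y \<omega>))))"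
proof -
  let ?XY = "\<lambda>\<omega>. (X \<omega>, Y \<omega>)"
  have "cond_entropy2 p \<Omega> X Y =
      - (\<Sum>\<omega>\<in>\<Omega>. p \<omega> * log 2 (prob_of p \<Omega> ?XY (?XY \<omega>) / prob_of p \<Omega> Y (Y \<omega>)))"
    unfolding cond_entropy2_def
    using sum_prob_of_image[OF assms(1), of p ?XY "\<lambda>(x, y). log 2 (prob_of p \<Omega> ?XY (x, y) / prob_of p \<Omega> Y y)"]
    by (simp add: case_prod_unfold)
  also have "\<dots> = - (\<Sum>\<omega>\<in>\<Omega>. p \<omega> * (log 2 (prob_of p \<Omega> ?XY (?XY \<omega>)) - log 2 (prob_of p \<Omega> Y (Y \<omega>))))"
  proof (intro arg_cong[where f = uminus] sum.cong refl)
    fix \<omega> assume \<omega>: "\<omega> \<in> \<Omega>"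
    show "p \<omega> * log 2 (prob_of p \<Omega> ?XY (?XY \<omega>) / prob_of p \<Omega> Y (Y \<omega>)) =
          p \<omega> * (log 2 (prob_of p \<Omega> ?XY (?XY \<omega>)) - log 2 (prob_of p \<Omega> Y (Y \<omega>)))"
    proof (cases "p \<omega> = 0")
      case False
      then have "p \<omega> > 0" using assms(2)[OF \<omega>] by simp
      moreover have "p \<omega> \<le> prob_of p \<Omega> ?XY (?XY \<omega>)" "p \<omega> \<le> prob_of p \<Omega> Y (Y \<omega>)"
        using prob_of_ge_weight[of \<Omega> p, OF assms \<omega>] by blast+
      ultimately show ?thesis by (simp add: log_divide)
    qed simp
  qed
  finally show ?thesis .
qed

text \<open>Chain rule along a filtration \<open>A\<close>: each term is \<open>H(A i) - H(A (i - 1))\<close>, so the sum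
  telescopes from \<open>H(A 0) = 0\<close> to \<open>H(A n)\<close>, the entropy of the outcome itself.\<close>

lemma sum_cond_entropy2_filtration:
  fixes n :: nat
  assumes fin: "finite \<Omega>" and nonneg: "\<And>\<omega>. \<omega> \<in> \<Omega> \<Longrightarrow> p \<omega> \<ge> 0"
    and total: "(\<Sum>\<omega>\<in>\<Omega>. p \<omega>) = 1"
    and XY_partition: "\<And>i \<omega> \<omega>'. i \<in> {1..n} \<Longrightarrow> \<omega> \<in> \<Omega> \<Longrightarrow> \<omega>' \<in> \<Omega> \<Longrightarrow>
        (X i \<omega>', Y i \<omega>') = (X i \<omega>, Y i \<omega>) \<longleftrightarrow> A i \<omega>' = A i \<omega>"
    and Y_partition: "\<And>i \<omega> \<omega>'. i \<in> {1..n} \<Longrightarrow> \<omega> \<in> \<Omega> \<Longrightarrow> \<omega>' \<in> \<Omega> \<Longrightarrow>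
        Y i \<omega>' = Y i \<omega> \<longleftrightarrow> A (i - 1) \<omega>' = A (i - 1) \<omega>"
    and A_0: "\<And>\<omega> \<omega>'. \<omega> \<in> \<Omega> \<Longrightarrow> \<omega>' \<in> \<Omega> \<Longrightarrow> A 0 \<omega>' = A 0 \<omega>"
    and A_n: "inj_on (A n) \<Omega>"
  shows "(\<Sum>i=1..n. cond_entropy2 p \<Omega> (X i) (Y i)) = entropy2 p \<Omega> (\<lambda>\<omega>. \<omega>)"
proof -
  define L where "L i \<omega> = log 2 (prob_of p \<Omega> (A i) (A i \<omega>))" for i \<omega>
  have step: "cond_entropy2 p \<Omega> (X i) (Y i) = - (\<Sum>\<omega>\<in>\<Omega>. p \<omega> * (L i \<omega> - L (i - 1) \<omega>))"
    if i: "i \<in> {1..n}" for i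
  proof -
    have "prob_of p \<Omega> (\<lambda>\<omega>. (X i \<omega>, Y i \<omega>)) (X i \<omega>, Y i \<omega>) = prob_of p \<Omega> (A i) (A i \<omega>)"
      and "prob_of p \<Omega> (Y i) (Y i \<omega>) = prob_of p \<Omega> (A (i - 1)) (A (i - 1) \<omega>)"
      if "\<omega> \<in> \<Omega>" for \<omega>
      using prob_of_cong_partition[of \<Omega> "\<lambda>\<omega>. (X i \<omega>, Y i \<omega>)" \<omega> "A i" p]
        prob_of_cong_partition[of \<Omega> "Y i" \<omega> "A (i - 1)" p]
        XY_partition[OF i that] Y_partition[OF i that] by simp_all
    then show ?thesis
      by (simp add: cond_entropy2_eq_sum[where p = p, OF fin nonneg] L_def)
  qed
  have L_0: "L 0 \<omega> = 0" if "\<omega> \<in> \<Omega>" for \<omega>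
  proof -
    have "{\<omega>'\<in>\<Omega>. A 0 \<omega>' = A 0 \<omega>} = \<Omega>" using A_0[OF that] by auto
    then show ?thesis by (simp add: L_def prob_of_def total)
  qed
  have L_n: "L n \<omega> = log 2 (p \<omega>)" if "\<omega> \<in> \<Omega>" for \<omega>
  proof -
    have "{\<omega>'\<in>\<Omega>. A n \<omega>' = A n \<omega>} = {\<omega>}" using that A_n by (auto dest: inj_onD)
    then show ?thesis by (simp add: L_def prob_of_def)
  qed
  have "(\<Sum>i=1..n. cond_entropy2 p \<Omega> (X i) (Y i)) =
      - (\<Sum>\<omega>\<in>\<Omega>. p \<omega> * (\<Sum>i=1..n. L i \<omega> - L (i - 1) \<omega>))"
    by (simp add: step sum_negf sum_distrib_left) (rule sum.swap)
  also have "\<dots> = - (\<Sum>\<omega>\<in>\<Omega>. p \<omega> * (L n \<omega> - L 0 \<omega>))"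
    using sum_telescope''[where m = 0 and n = n and f = "\<lambda>i. L i _"] by simp
  also have "\<dots> = entropy2 p \<Omega> (\<lambda>\<omega>. \<omega>)"
    by (simp add: entropy2_id[OF fin] L_0 L_n)
  finally show ?thesis .
qed

lemma finite_seqs: "finite (seqs n :: 'v::finite list set)"
  by (simp add: seqs_def finite_list_length)

lemma seqs_Suc: "seqs (Suc n) = (\<lambda>(xs, t). xs @ [t]) ` (seqs n \<times> UNIV)"
proof
  show "seqs (Suc n) \<subseteq> (\<lambda>(xs, t). xs @ [t]) ` (seqs n \<times> UNIV)"
  proof
    fix ys assume "ys \<in> seqs (Suc n)"
    then have l: "length ys = Suc n" by (simp add: seqs_def)
    then have "ys = butlast ys @ [last ys]"
      by (metis append_butlast_last_id list.size(3) nat.distinct(1))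
    moreover have "butlast ys \<in> seqs n" using l by (simp add: seqs_def)
    ultimately show "ys \<in> (\<lambda>(xs, t). xs @ [t]) ` (seqs n \<times> UNIV)" by force
  qed
qed (auto simp: seqs_def)

lemma seq_prob_snoc: "seq_prob P (xs @ [t]) = seq_prob P xs * P xs t"
proof -
  have "(\<Prod>i<length xs. P (take i (xs @ [t])) ((xs @ [t]) ! i)) = seq_prob P xs"
    unfolding seq_prob_def by (intro prod.cong refl) (auto simp: nth_append)
  then show ?thesis by (simp add: seq_prob_def)
qed

lemma seq_prob_nonneg:
  assumes "\<And>xs t. P xs t \<ge> 0"
  shows "seq_prob P xs \<ge> 0"
  unfolding seq_prob_def using assms by (intro prod_nonneg) simp

lemma sum_seq_prob_seqs:
  fixes P :: "'v::finite list \<Rightarrow> 'v \<Rightarrow> real"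
  assumes P_sum: "\<And>xs. (\<Sum>t\<in>UNIV. P xs t) = 1"
  shows "(\<Sum>xs\<in>seqs n. seq_prob P xs) = 1"
proof (induction n)
  case 0
  have "(seqs 0 :: 'v list set) = {[]}" by (auto simp: seqs_def)
  then show ?case by (simp add: seq_prob_def)
next
  case (Suc n)
  have inj: "inj_on (\<lambda>(xs, t). xs @ [t]) (seqs n \<times> (UNIV :: 'v set))"
    by (auto simp: inj_on_def)
  have "(\<Sum>xs\<in>seqs (Suc n). seq_prob P xs) = (\<Sum>(xs, t)\<in>seqs n \<times> UNIV. seq_prob P (xs @ [t]))"
    unfolding seqs_Suc by (subst sum.reindex[OF inj]) (simp add: case_prod_unfold)
  also have "\<dots> = (\<Sum>xs\<in>seqs n. seq_prob P xs * (\<Sum>t\<in>UNIV. P xs t))"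
    by (simp add: sum.cartesian_product[symmetric] seq_prob_snoc sum_distrib_left)
  finally show ?case using Suc by (simp add: P_sum)
qed

lemma log2_perplexity:
  "log 2 (perplexity P n) = entropy2 (seq_prob P) (seqs n :: 'v::finite list set) (\<lambda>\<omega>. \<omega>) / real n"
  by (simp add: perplexity_def entropy2_id[OF finite_seqs] sum_negf)

lemma KV_upto_Suc: "i \<ge> 1 \<Longrightarrow> KV_upto F (Suc i) xs = KV_upto F i xs @ [KV F i xs]"
  unfolding KV_upto_def by simp

lemma map_key1_KV_upto:
  assumes key_component: "\<And>xs t. key1 (F (xs @ [t])) = WK (E t)"
    and "k \<le> length w"
  shows "map key1 (KV_upto F (Suc k) w) = map (\<lambda>t. WK (E t)) (take k w)"
proof (rule nth_equalityI)
  fix j assume "j < length (map key1 (KV_upto F (Suc k) w))"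
  then have "j < k" by (simp add: KV_upto_def del: upt_Suc)
  then have "take (Suc j) w = take j w @ [w ! j]"
    using assms(2) by (simp add: take_Suc_conv_app_nth)
  with \<open>j < k\<close> show "map key1 (KV_upto F (Suc k) w) ! j = map (\<lambda>t. WK (E t)) (take k w) ! j"
    using assms(2) by (simp add: KV_upto_def KV_def key_component del: upt_Suc)
qed (use assms(2) in \<open>simp add: KV_upto_def del: upt_Suc\<close>)

lemma KV_upto_eq_iff_take_eq:
  assumes key_component: "\<And>xs t. key1 (F (xs @ [t])) = WK (E t)"
    and keys_distinct: "inj (\<lambda>t. WK (E t))"
    and "k \<le> length w" "k \<le> length w'"
  shows "KV_upto F (Suc k) w = KV_upto F (Suc k) w' \<longleftrightarrow> take k w = take k w'"
proof
  assume "KV_upto F (Suc k) w = KV_upto F (Suc k) w'"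
  then have "map (\<lambda>t. WK (E t)) (take k w) = map (\<lambda>t. WK (E t)) (take k w')"
    using map_key1_KV_upto[of key1 F WK E, OF key_component] assms(3,4) by metis
  then show "take k w = take k w'" using keys_distinct by simp
next
  assume "take k w = take k w'"
  then have "take j w = take j w'" if "j \<le> k" for j
    using that by (metis min.absorb1 take_take)
  then show "KV_upto F (Suc k) w = KV_upto F (Suc k) w'"
    by (simp add: KV_upto_def KV_def del: upt_Suc)
qed

theorem mainTheorem2:
  fixes P :: "'v::finite list \<Rightarrow> 'v \<Rightarrow> real"
    and F :: "'v list \<Rightarrow> 'a"
    and key1 :: "'a \<Rightarrow> 'k"
    and E :: "'v \<Rightarrow> 'e"
    and WK :: "'e \<Rightarrow> 'k"
    and n :: nat
  assumes n_pos: "n \<ge> 1"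
    and P_nonneg: "\<And>xs t. P xs t \<ge> 0"
    and P_sum: "\<And>xs. (\<Sum>t\<in>UNIV. P xs t) = 1"
    and key_component: "\<And>xs t. key1 (F (xs @ [t])) = WK (E t)"
    and keys_distinct: "inj (\<lambda>t. WK (E t))"
  shows "(1 / real n) * (\<Sum>i=1..n. cond_entropy2 (seq_prob P) (seqs n) (KV F i) (KV_upto F i))
           \<le> log 2 (perplexity P n)
       \<and> (perplexity P n \<le> 20 \<longrightarrow>
           (1 / real n) * (\<Sum>i=1..n. cond_entropy2 (seq_prob P) (seqs n) (KV F i) (KV_upto F i))
             \<le> log 2 20)"
proof -
  have take_n_inj: "inj_on (take n) (seqs n :: 'v list set)"
    by (auto simp: inj_on_def seqs_def)
  note KV_prefix = KV_upto_eq_iff_take_eq[of key1 F WK E, OF key_component keys_distinct]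
  have "(\<Sum>i=1..n. cond_entropy2 (seq_prob P) (seqs n) (KV F i) (KV_upto F i))
      = entropy2 (seq_prob P) (seqs n) (\<lambda>\<omega>. \<omega>)"
  proof (rule sum_cond_entropy2_filtration[where A = take])
    fix i and \<omega> \<omega>' :: "'v list"
    assume "i \<in> {1..n}" "\<omega> \<in> seqs n" "\<omega>' \<in> seqs n"
    then have i: "1 \<le> i" "i \<le> length \<omega>" "i \<le> length \<omega>'" by (auto simp: seqs_def)
    show "(KV F i \<omega>', KV_upto F i \<omega>') = (KV F i \<omega>, KV_upto F i \<omega>) \<longleftrightarrow> take i \<omega>' = take i \<omega>"
      using KV_prefix[of i \<omega>' \<omega>] i by (auto simp: KV_upto_Suc)
    show "KV_upto F i \<omega>' = KV_upto F i \<omega> \<longleftrightarrow> take (i - 1) \<omega>' = take (i - 1) \<omega>"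
      using KV_prefix[of "i - 1" \<omega>' \<omega>] i by simp
  qed (simp_all add: finite_seqs seq_prob_nonneg P_nonneg sum_seq_prob_seqs P_sum take_n_inj)
  then have "(1 / real n) * (\<Sum>i=1..n. cond_entropy2 (seq_prob P) (seqs n) (KV F i) (KV_upto F i))
      = log 2 (perplexity P n)"
    by (simp add: log2_perplexity)
  moreover have "perplexity P n > 0" by (simp add: perplexity_def)
  ultimately show ?thesis by simp
qed

end
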